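(* Let $A\in\mathbb C^{N\times N}$ be an adjacency matrix with $k$ distinct eigenvalues $\lambda_1,\dots,\lambda_k$, and for each $i=1,\dots,k$ let $V_i\in\mathbb C^{N\times a_i}$ ($a_i$ the algebraic multiplicity of $\lambda_i$) be an eigenvector submatrix whose columns form the union of the Jordan chains of $\lambda_i$ in a Jordan decomposition $A=VJV^{-1}$, normalized so that $\|V_i\|_1=1$. Then the graph total variation satisfies $\mathrm{TV}_G(V_i)=\|V_i-AV_i\|_1\le |1-\lambda_i|+1$.
   Context: $\|\cdot\|_1$ denotes the matrix norm induced by the vector $1$-norm (maximum absolute column sum). A Jordan chain of $A$ for $\lambda$ is a sequence $v_1,\dots,v_p$ with $(A-\lambda I)v_1=0$, $v_1\neq0$, and $(A-\lambda I)v_j=v_{j-1}$ for $j\ge2$; the union of the Jordan chains of $\lambda_i$ spans the generalized eigenspace $\mathrm{Ker}(A-\lambda_iI)^{m_i}$. *)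

theory Defs
  imports "Jordan_Normal_Form.Jordan_Normal_Form"
begin

definition norm1_mat :: "complex mat \<Rightarrow> real" where
  "norm1_mat M = Max (insert 0 {(\<Sum>i<dim_row M. cmod (M $$ (i, j))) | j. j < dim_col M})"

definition graph_TV :: "complex mat \<Rightarrow> complex mat \<Rightarrow> real" where
  "graph_TV A V = norm1_mat (V - A * V)"

text \<open>Index of the first column of block number b in the Jordan matrix jordan_matrix bs.\<close>
definition block_start :: "(nat \<times> 'a) list \<Rightarrow> nat \<Rightarrow> nat" where
  "block_start bs b = sum_list (map fst (take b bs))"

definition eig_col_indices :: "(nat \<times> 'a) list \<Rightarrow> 'a \<Rightarrow> nat list" where
  "eig_col_indices bs lam =
     concat (map (\<lambda>b. [block_start bs b ..< block_start bs b + fst (bs ! b)])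
                 (filter (\<lambda>b. snd (bs ! b) = lam) [0..<length bs]))"

text \<open>Eigenvector submatrix: the columns of P forming the Jordan chains of lam
  in the Jordan decomposition A = P * jordan_matrix bs * P^-1.\<close>
definition jordan_eigvec_submatrix :: "'a mat \<Rightarrow> (nat \<times> 'a) list \<Rightarrow> 'a \<Rightarrow> 'a mat" where
  "jordan_eigvec_submatrix P bs lam = mat_of_cols (dim_row P) (map (col P) (eig_col_indices bs lam))"

end

theory Submission
  imports Defs
begin

text \<open>In the Jordan basis given by the columns of \<open>P\<close>, a column \<open>v\<close> of \<open>P\<close> lying in a
  block for \<open>lam\<close> satisfies \<open>A v = lam v + w\<close>, where \<open>w\<close> is \<open>0\<close> at the head of the chain and
  the preceding chain vector otherwise; both are again (multiples of) columns of \<open>Vi\<close>.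
  Hence every column \<open>v - A v = (1 - lam) v - w\<close> of \<open>Vi - A Vi\<close> has 1-norm at most
  \<open>\<bar>1 - lam\<bar> \<parallel>Vi\<parallel>\<^sub>1 + \<parallel>Vi\<parallel>\<^sub>1\<close>.\<close>

lemma block_start_Cons_0 [simp]: "block_start (x # xs) 0 = 0"
  by (simp add: block_start_def)

lemma block_start_Cons_Suc [simp]: "block_start (x # xs) (Suc b) = fst x + block_start xs b"
  by (simp add: block_start_def)

lemma block_start_add_le:
  "b < length bs \<Longrightarrow> block_start bs b + fst (bs ! b) \<le> sum_list (map fst bs)"
proof (induction bs arbitrary: b)
  case (Cons x xs)
  then show ?case by (cases b) auto
qed simp

lemma set_eig_col_indices:
  "set (eig_col_indices bs lam) =
    {block_start bs b + t | b t. b < length bs \<and> snd (bs ! b) = lam \<and> t < fst (bs ! b)}"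
  (is "?l = ?r")
proof
  show "?l \<subseteq> ?r"
  proof
    fix j assume "j \<in> ?l"
    then obtain b where "b < length bs" "snd (bs ! b) = lam"
      "block_start bs b \<le> j" "j < block_start bs b + fst (bs ! b)"
      unfolding eig_col_indices_def by auto
    then show "j \<in> ?r" by (intro CollectI exI[of _ b] exI[of _ "j - block_start bs b"]) auto
  qed
  show "?r \<subseteq> ?l" unfolding eig_col_indices_def by force
qed

lemma jordan_matrix_index_block_col:
  assumes "b < length bs" "t < fst (bs ! b)" "i < sum_list (map fst bs)"
  shows "jordan_matrix bs $$ (i, block_start bs b + t) =
    (if i = block_start bs b + t then snd (bs ! b)
     else if Suc i = block_start bs b + t \<and> 0 < t then 1 else 0)"
  using assms
proof (induction bs arbitrary: b i)
  case (Cons x xs)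
  obtain n a where x: "x = (n, a)" by force
  show ?case
  proof (cases b)
    case 0
    then show ?thesis using Cons.prems unfolding x jordan_matrix_Cons
      by (auto simp: jordan_matrix_def[symmetric])
  next
    case (Suc b')
    with Cons.prems have b': "b' < length xs" "t < fst (xs ! b')" by auto
    then have "block_start xs b' + t < sum_list (map fst xs)"
      using block_start_add_le[of b' xs] by linarith
    then show ?thesis using Cons.IH Cons.prems Suc b' unfolding x jordan_matrix_Cons
      by (cases "i < n") auto
  qed
qed simp

lemma mult_mat_vec_unit_vec:
  "(A :: 'a :: semiring_1 mat) \<in> carrier_mat nr n \<Longrightarrow> j < n \<Longrightarrow> A *\<^sub>v unit_vec n j = col A j"
  by (intro eq_vecI) auto

lemma col_jordan_matrix_block:
  fixes bs :: "(nat \<times> 'a :: comm_ring_1) list"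
  assumes "b < length bs" "t < fst (bs ! b)"
  shows "col (jordan_matrix bs) (block_start bs b + t) =
    snd (bs ! b) \<cdot>\<^sub>v unit_vec (sum_list (map fst bs)) (block_start bs b + t)
    + (if 0 < t then unit_vec (sum_list (map fst bs)) (block_start bs b + t - 1)
       else 0\<^sub>v (sum_list (map fst bs)))"
proof -
  have "block_start bs b + t < sum_list (map fst bs)"
    using block_start_add_le[OF assms(1)] assms(2) by linarith
  then show ?thesis
    using jordan_matrix_index_block_col[OF assms] by (intro eq_vecI) auto
qed

lemma similar_mat_wit_mult_right:
  assumes "similar_mat_wit A B P Q"
  shows "A * P = P * B"
proof -
  obtain n where A: "A \<in> carrier_mat n n" by (meson similar_mat_witD(4)[OF refl assms])
  note wit = similar_mat_witD2[OF A assms]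
  have "A * P = P * B * Q * P" using wit(3) by simp
  also have "\<dots> = P * B * (Q * P)" using wit(5-7) by (meson assoc_mult_mat mult_carrier_mat)
  also have "\<dots> = P * B" using wit(2,5,6) by simp
  finally show ?thesis .
qed

lemma similar_mat_wit_jordan_chain:
  fixes A P Q :: "'a :: field mat"
  assumes wit: "similar_mat_wit A (jordan_matrix bs) P Q"
    and b: "b < length bs" and t: "t < fst (bs ! b)"
  shows "A *\<^sub>v col P (block_start bs b + t) =
    snd (bs ! b) \<cdot>\<^sub>v col P (block_start bs b + t)
    + (if 0 < t then col P (block_start bs b + t - 1) else 0\<^sub>v (dim_row A))"
proof -
  let ?n = "dim_row A" and ?j = "block_start bs b + t"
  have J: "jordan_matrix bs \<in> carrier_mat ?n ?n" and P: "P \<in> carrier_mat ?n ?n"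
    using similar_mat_witD(5,6)[OF refl wit] .
  then have n: "sum_list (map fst bs) = ?n" by (metis carrier_matD(1) jordan_matrix_dim(1))
  have j: "?j < ?n" using block_start_add_le[OF b] t n by linarith
  have "A *\<^sub>v col P ?j = col (P * jordan_matrix bs) ?j"
    unfolding similar_mat_wit_mult_right[OF wit, symmetric]
    by (rule col_mult2[OF similar_mat_witD(4)[OF refl wit] P j, symmetric])
  also have "\<dots> = P *\<^sub>v col (jordan_matrix bs) ?j" by (rule col_mult2[OF P J j])
  also have "\<dots> = snd (bs ! b) \<cdot>\<^sub>v (P *\<^sub>v unit_vec ?n ?j)
      + P *\<^sub>v (if 0 < t then unit_vec ?n (?j - 1) else 0\<^sub>v ?n)"
    unfolding col_jordan_matrix_block[OF b t] n using P
    by (simp add: mult_add_distrib_mat_vec mult_mat_vec)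
  also have "\<dots> = snd (bs ! b) \<cdot>\<^sub>v col P ?j
      + (if 0 < t then col P (?j - 1) else 0\<^sub>v ?n)"
    using P j by (auto simp: mult_mat_vec_unit_vec)
  finally show ?thesis .
qed

definition norm1_vec :: "complex vec \<Rightarrow> real" where
  "norm1_vec v = (\<Sum>i<dim_vec v. cmod (v $ i))"

lemma norm1_vec_smult: "norm1_vec (c \<cdot>\<^sub>v v) = cmod c * norm1_vec v"
  unfolding norm1_vec_def by (simp add: norm_mult sum_distrib_left)

lemma norm1_vec_diff_le:
  assumes "dim_vec w = dim_vec v"
  shows "norm1_vec (v - w) \<le> norm1_vec v + norm1_vec w"
  unfolding norm1_vec_def using assms
  by (simp add: sum.distrib[symmetric]) (intro sum_mono norm_triangle_ineq4)

lemma norm1_vec_col_le_norm1_mat: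
  "k < dim_col M \<Longrightarrow> norm1_vec (col M k) \<le> norm1_mat M"
  unfolding norm1_mat_def norm1_vec_def by (rule Max_ge) auto

lemma norm1_mat_nonneg: "0 \<le> norm1_mat M"
  unfolding norm1_mat_def by (rule Max_ge) auto

lemma norm1_mat_leI:
  assumes "0 \<le> B" "\<And>k. k < dim_col M \<Longrightarrow> norm1_vec (col M k) \<le> B"
  shows "norm1_mat M \<le> B"
  unfolding norm1_mat_def using assms by (subst Max_le_iff) (auto simp: norm1_vec_def)

text \<open>The only property of a union of Jordan chains that the bound uses: \<open>A - lam I\<close>
  sends every column to zero or to another column.\<close>

definition jordan_chain_cols :: "'a :: semiring_1 mat \<Rightarrow> 'a \<Rightarrow> 'a mat \<Rightarrow> bool" where
  "jordan_chain_cols A lam V \<longleftrightarrow> (\<forall>k < dim_col V.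
     A *\<^sub>v col V k = lam \<cdot>\<^sub>v col V k \<or>
     (\<exists>k' < dim_col V. A *\<^sub>v col V k = lam \<cdot>\<^sub>v col V k + col V k'))"

lemma norm1_mat_minus_mult_le:
  assumes A: "A \<in> carrier_mat n n" and V: "V \<in> carrier_mat n m"
    and chain: "jordan_chain_cols A lam V"
  shows "norm1_mat (V - A * V) \<le> (cmod (1 - lam) + 1) * norm1_mat V"
proof (rule norm1_mat_leI)
  show "0 \<le> (cmod (1 - lam) + 1) * norm1_mat V" by (simp add: norm1_mat_nonneg)
next
  fix k assume "k < dim_col (V - A * V)"
  moreover have "dim_col (V - A * V) = m" using V by simp
  ultimately have k: "k < m" by simp
  let ?v = "col V k"
  have v: "?v \<in> carrier_vec n" using V k by simp
  obtain w where w: "A *\<^sub>v ?v = lam \<cdot>\<^sub>v ?v + w" "w \<in> carrier_vec n"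
    "norm1_vec w \<le> norm1_mat V"
  proof (cases "A *\<^sub>v ?v = lam \<cdot>\<^sub>v ?v")
    case True
    with that[of "0\<^sub>v n"] v show ?thesis
      by (simp add: norm1_vec_def norm1_mat_nonneg)
  next
    case False
    with chain k V obtain k' where "k' < m" "A *\<^sub>v ?v = lam \<cdot>\<^sub>v ?v + col V k'"
      unfolding jordan_chain_cols_def by auto
    with that[of "col V k'"] V show ?thesis
      using norm1_vec_col_le_norm1_mat[of k' V] by simp
  qed
  have "col (V - A * V) k = ?v - A *\<^sub>v ?v"
    using A V k by (intro eq_vecI) auto
  also have "\<dots> = (1 - lam) \<cdot>\<^sub>v ?v - w"
    unfolding w(1) using V w(2) by (intro eq_vecI) (auto simp: left_diff_distrib)
  finally have "norm1_vec (col (V - A * V) k) \<le> cmod (1 - lam) * norm1_vec ?v + norm1_vec w"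
    using norm1_vec_diff_le[of w "(1 - lam) \<cdot>\<^sub>v ?v"] V w(2) by (simp add: norm1_vec_smult)
  also have "\<dots> \<le> cmod (1 - lam) * norm1_mat V + norm1_mat V"
    using norm1_vec_col_le_norm1_mat[of k V] V k w(3) by (intro add_mono mult_left_mono) auto
  finally show "norm1_vec (col (V - A * V) k) \<le> (cmod (1 - lam) + 1) * norm1_mat V"
    by (simp add: algebra_simps)
qed

lemma jordan_chain_cols_smult:
  fixes A V :: "'a :: field mat"
  assumes A: "A \<in> carrier_mat n n" and V: "V \<in> carrier_mat n m"
    and chain: "jordan_chain_cols A lam V"
  shows "jordan_chain_cols A lam (c \<cdot>\<^sub>m V)"
  unfolding jordan_chain_cols_def
proof (intro allI impI)
  fix k assume "k < dim_col (c \<cdot>\<^sub>m V)"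
  then have k: "k < m" using V by simp
  have cV: "col (c \<cdot>\<^sub>m V) j = c \<cdot>\<^sub>v col V j" if "j < m" for j
    using V that by simp
  have scale: "A *\<^sub>v (c \<cdot>\<^sub>v col V k) = c \<cdot>\<^sub>v (A *\<^sub>v col V k)"
    using A V k by (simp add: mult_mat_vec)
  consider "A *\<^sub>v col V k = lam \<cdot>\<^sub>v col V k"
    | k' where "k' < m" "A *\<^sub>v col V k = lam \<cdot>\<^sub>v col V k + col V k'"
    using chain k V unfolding jordan_chain_cols_def by auto
  then show "A *\<^sub>v col (c \<cdot>\<^sub>m V) k = lam \<cdot>\<^sub>v col (c \<cdot>\<^sub>m V) k \<or>
    (\<exists>k' < dim_col (c \<cdot>\<^sub>m V). A *\<^sub>v col (c \<cdot>\<^sub>m V) k = lam \<cdot>\<^sub>v col (c \<cdot>\<^sub>m V) k + col (c \<cdot>\<^sub>m V) k')"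
  proof cases
    case 1
    then show ?thesis unfolding cV[OF k] scale by (simp add: smult_smult_assoc mult.commute)
  next
    case (2 k')
    have "A *\<^sub>v col (c \<cdot>\<^sub>m V) k = lam \<cdot>\<^sub>v col (c \<cdot>\<^sub>m V) k + col (c \<cdot>\<^sub>m V) k'"
      unfolding cV[OF k] cV[OF 2(1)] scale 2(2)
      using V k 2(1) by (intro eq_vecI) (simp_all add: distrib_left mult.left_commute)
    then show ?thesis using 2(1) V by auto
  qed
qed

lemma jordan_chain_cols_eigvec_submatrix:
  fixes A P Q :: "'a :: field mat"
  assumes wit: "similar_mat_wit A (jordan_matrix bs) P Q"
  shows "jordan_chain_cols A lam (jordan_eigvec_submatrix P bs lam)"
  unfolding jordan_chain_cols_def
proof (intro allI impI)
  let ?idx = "eig_col_indices bs lam" and ?V = "jordan_eigvec_submatrix P bs lam"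
  have colV: "col ?V k = col P (?idx ! k)" if "k < length ?idx" for k
    using that unfolding jordan_eigvec_submatrix_def by simp
  have dim: "dim_col ?V = length ?idx" unfolding jordan_eigvec_submatrix_def by simp
  fix k assume "k < dim_col ?V"
  then have k: "k < length ?idx" using dim by simp
  then have "?idx ! k \<in> set ?idx" by simp
  then obtain b t where b: "b < length bs" and lam: "snd (bs ! b) = lam" and t: "t < fst (bs ! b)"
    and j: "?idx ! k = block_start bs b + t"
    unfolding set_eig_col_indices by blast
  note chain = similar_mat_wit_jordan_chain[OF wit b t, folded j, unfolded lam, folded colV[OF k]]
  show "A *\<^sub>v col ?V k = lam \<cdot>\<^sub>v col ?V k \<or>
    (\<exists>k' < dim_col ?V. A *\<^sub>v col ?V k = lam \<cdot>\<^sub>v col ?V k + col ?V k')"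
  proof (cases "t = 0")
    case True
    have "col ?V k \<in> carrier_vec (dim_row A)"
      unfolding colV[OF k] carrier_matD(1)[OF similar_mat_witD(6)[OF refl wit], symmetric]
      by (rule col_dim)
    then show ?thesis using chain True by simp
  next
    case False
    then have "block_start bs b + t - 1 \<in> set ?idx"
      unfolding set_eig_col_indices using b lam t
      by (intro CollectI exI[of _ b] exI[of _ "t - 1"]) auto
    then obtain k' where k': "k' < length ?idx" "?idx ! k' = block_start bs b + t - 1"
      by (meson in_set_conv_nth)
    then have "A *\<^sub>v col ?V k = lam \<cdot>\<^sub>v col ?V k + col ?V k'"
      using chain False colV[OF k'(1)] j by simp
    then show ?thesis using k'(1) dim by auto
  qed
qed

theorem theorem2:
  fixes A P Q Vi :: "complex mat" and bs :: "(nat \<times> complex) list"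
    and lam c :: complex and N :: nat
  assumes "A \<in> carrier_mat N N"
    and "similar_mat_wit A (jordan_matrix bs) P Q"
    and "eigenvalue A lam"
    and "Vi = c \<cdot>\<^sub>m jordan_eigvec_submatrix P bs lam"
    and "norm1_mat Vi = 1"
  shows "graph_TV A Vi = norm1_mat (Vi - A * Vi) \<and> graph_TV A Vi \<le> cmod (1 - lam) + 1"
proof -
  let ?V = "jordan_eigvec_submatrix P bs lam"
  let ?m = "length (eig_col_indices bs lam)"
  have "dim_row P = N" using similar_mat_witD2(6)[OF assms(1,2)] by simp
  then have V: "?V \<in> carrier_mat N ?m"
    unfolding jordan_eigvec_submatrix_def using mat_of_cols_carrier(1) length_map by metis
  have Vi: "Vi \<in> carrier_mat N ?m" using V assms(4) by simp
  have "jordan_chain_cols A lam Vi"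
    unfolding assms(4)
    using jordan_chain_cols_smult[OF assms(1) V jordan_chain_cols_eigvec_submatrix[OF assms(2)]] .
  from norm1_mat_minus_mult_le[OF assms(1) Vi this]
  have "norm1_mat (Vi - A * Vi) \<le> cmod (1 - lam) + 1" unfolding assms(5) by simp
  then show ?thesis unfolding graph_TV_def by simp
qed

end
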